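(* Let $\Gamma\subseteq C^0(\mathbb{R})$ be a class such that for every compact $K\subset\mathbb{R}$, continuous $h:K\to\mathbb{R}$ and $\eta>0$ there is $\gamma\in\Gamma$ with $\sup_K|h-\gamma|<\eta$. Let $\mathcal{G}$ be a class of real functions that are continuously differentiable on an open set containing $[0,1]^d$, such that for every $R(\boldsymbol{x})=\sum_{i=1}^N\psi_i(\boldsymbol{a}_i^\top\boldsymbol{x}+b_i)$ with $\psi_i\in C^1(\mathbb{R})$ and every $\eta>0$ there is $G\in\mathcal{G}$ with $\sup_{[0,1]^d}\|\nabla R-\nabla G\|<\eta$. Let $F:[0,1]^d\to\mathbb{R}$ be of the form $F(\boldsymbol{x})=T\big(\sum_{i=1}^N\psi_i(\boldsymbol{a}_i^\top\boldsymbol{x}+b_i)\big)$ with $T,\psi_i\in C^1(\mathbb{R})$, $\boldsymbol{a}_i\in\mathbb{R}^d$, $b_i\in\mathbb{R}$. Then for every $\epsilon>0$ there exist $\gamma\in\Gamma$, $G\in\mathcal{G}$ and $\beta\in\mathbb{R}$ such that, with $h(\boldsymbol{x})=\gamma(G(\boldsymbol{x})+\beta)\,\nabla G(\boldsymbol{x})$, $$\sup_{\boldsymbol{x}\in[0,1]^d}\|\nabla F(\boldsymbol{x})-h(\boldsymbol{x})\|<\epsilon .$$ Moreover every function of the form $h=\gamma(G+\beta)\nabla G$ with $\gamma$ continuous and $G$ continuously differentiable is the gradient of a $C^1$ function on $[0,1]^d$ (namely $\tilde\Gamma(G+\beta)$ with $\tilde\Gamma'=\gamma$).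
   Context: $C^0(\mathbb{R})$, $C^1(\mathbb{R})$: continuous and continuously differentiable real functions on $\mathbb{R}$. $\|\cdot\|$ is the Euclidean norm. *)

theory Defs
  imports "HOL-Analysis.Analysis"
begin

definition grad :: "(real^'n \<Rightarrow> real) \<Rightarrow> real^'n \<Rightarrow> real^'n" where
  "grad f x = (\<chi> i. frechet_derivative f (at x) (axis i 1))"

definition C1_on :: "(real^'n) set \<Rightarrow> (real^'n \<Rightarrow> real) \<Rightarrow> bool" where
  "C1_on U f \<longleftrightarrow> (\<forall>x\<in>U. f differentiable (at x)) \<and> continuous_on U (grad f)"

abbreviation unit_cube :: "(real^'n) set" where
  "unit_cube \<equiv> cbox 0 1"

end

theory Submission
  imports Defs
begin

text \<open>
  With R the ridge sum, F = T \<circ> R and \<nabla>F = T'(R) \<nabla>R. Pick G \<in> \<G> whose gradient is uniformly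
  close to \<nabla>R on the cube and set \<beta> = R(0) - G(0); by the mean value theorem G + \<beta> is then
  uniformly close to R, so T'(G + \<beta>) \<nabla>G is close to T'(R) \<nabla>R by uniform continuity of T' on a
  compact interval containing both ranges. It remains to replace T' by some \<gamma> \<in> \<Gamma> approximating
  it on that interval. The second claim is the chain rule for an antiderivative of \<gamma>.
\<close>

lemma grad_eqI:
  assumes "(f has_derivative (\<lambda>h. v \<bullet> h)) (at x)"
  shows "grad f x = v"
  using assms unfolding grad_def
  by (simp add: frechet_derivative_at[symmetric] inner_axis vec_eq_iff)

lemma has_derivative_grad:
  assumes "f differentiable (at x)"
  shows "(f has_derivative (\<lambda>h. grad f x \<bullet> h)) (at x)"
proof -
  let ?L = "frechet_derivative f (at x)"
  have L: "(f has_derivative ?L) (at x)"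
    using assms by (rule frechet_derivative_works[THEN iffD1])
  have "?L = (\<lambda>h. grad f x \<bullet> h)"
  proof
    fix h
    have "?L h = ?L (\<Sum>i\<in>UNIV. h $ i *s axis i 1)"
      by (simp add: basis_expansion)
    also have "\<dots> = (\<Sum>i\<in>UNIV. h $ i * ?L (axis i 1))"
      using has_derivative_linear[OF L] by (simp add: linear_sum linear_cmul scalar_mult_eq_scaleR)
    also have "\<dots> = grad f x \<bullet> h"
      by (simp add: grad_def inner_vec_def mult.commute)
    finally show "?L h = grad f x \<bullet> h" .
  qed
  then show ?thesis using L by simp
qed

lemma onorm_inner_le:
  fixes v :: "'a::{real_inner, perfect_space}"
  shows "onorm (\<lambda>h. v \<bullet> h) \<le> norm v"
proof (rule onorm_le)
  show "norm (v \<bullet> h) \<le> norm v * norm h" for h by (simp add: Cauchy_Schwarz_ineq2)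
qed

lemma grad_compose:
  assumes "f differentiable (at x)" "(g has_real_derivative g') (at (f x))"
  shows "(\<lambda>y. g (f y)) differentiable (at x)"
    and "grad (\<lambda>y. g (f y)) x = g' *\<^sub>R grad f x"
proof -
  have "((\<lambda>y. g (f y)) has_derivative (\<lambda>h. (g' *\<^sub>R grad f x) \<bullet> h)) (at x)"
    using has_derivative_compose[OF has_derivative_grad[OF assms(1)]
        assms(2)[unfolded has_field_derivative_def]] by simp
  then show "(\<lambda>y. g (f y)) differentiable (at x)" "grad (\<lambda>y. g (f y)) x = g' *\<^sub>R grad f x"
    by (auto intro: differentiableI grad_eqI)
qed

lemma C1_on_imp_continuous_on: "C1_on U f \<Longrightarrow> continuous_on U f"
  unfolding C1_on_def
  by (intro continuous_at_imp_continuous_on) (blast intro: differentiable_imp_continuous_within)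

lemma C1_on_compose:
  assumes f: "C1_on U f" and g: "\<And>t. (g has_real_derivative g' t) (at t)"
    and g': "continuous_on UNIV g'"
  shows "C1_on U (\<lambda>x. g (f x))"
    and "\<And>x. x \<in> U \<Longrightarrow> grad (\<lambda>x. g (f x)) x = g' (f x) *\<^sub>R grad f x"
proof -
  have df: "f differentiable (at x)" if "x \<in> U" for x using f that by (simp add: C1_on_def)
  show grad_eq: "grad (\<lambda>x. g (f x)) x = g' (f x) *\<^sub>R grad f x" if "x \<in> U" for x
    using grad_compose(2)[OF df[OF that] g] .
  have "continuous_on U (\<lambda>x. g' (f x) *\<^sub>R grad f x)"
    using f continuous_on_compose2[OF g' C1_on_imp_continuous_on[OF f]]
    by (auto simp: C1_on_def intro!: continuous_intros)
  then show "C1_on U (\<lambda>x. g (f x))"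
    using grad_compose(1)[OF df g] grad_eq
    by (auto simp: C1_on_def cong: continuous_on_cong)
qed

lemma C1_on_affine: "C1_on U (\<lambda>x. a \<bullet> x + b)"
proof -
  have deriv: "((\<lambda>x. a \<bullet> x + b) has_derivative (\<lambda>h. a \<bullet> h)) (at x)" for x
    by (auto intro!: derivative_eq_intros)
  then have "grad (\<lambda>x. a \<bullet> x + b) = (\<lambda>x. a)"
    by (auto intro: grad_eqI)
  then show ?thesis
    using deriv by (auto simp: C1_on_def intro: differentiableI)
qed

lemma C1_on_add:
  assumes f: "C1_on U f" and g: "C1_on U g"
  shows "C1_on U (\<lambda>x. f x + g x)"
    and "\<And>x. x \<in> U \<Longrightarrow> grad (\<lambda>x. f x + g x) x = grad f x + grad g x"
proof -
  have deriv: "((\<lambda>x. f x + g x) has_derivative (\<lambda>h. (grad f x + grad g x) \<bullet> h)) (at x)"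
    if "x \<in> U" for x
    using has_derivative_add[OF has_derivative_grad has_derivative_grad, of f x g] f g that
    by (simp add: C1_on_def inner_add_left)
  then show grad_eq: "\<And>x. x \<in> U \<Longrightarrow> grad (\<lambda>x. f x + g x) x = grad f x + grad g x"
    by (rule grad_eqI)
  have "continuous_on U (\<lambda>x. grad f x + grad g x)"
    using f g by (auto simp: C1_on_def intro!: continuous_intros)
  then show "C1_on U (\<lambda>x. f x + g x)"
    using deriv grad_eq by (auto simp: C1_on_def intro: differentiableI cong: continuous_on_cong)
qed

lemma C1_on_const:
  fixes U :: "(real^'n) set"
  shows "C1_on U (\<lambda>x. c)"
proof -
  have "grad (\<lambda>x. c) x = 0" for x :: "real^'n"
    by (rule grad_eqI) simp
  then have "grad (\<lambda>x. c) = (\<lambda>x::real^'n. 0)" ..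
  then show ?thesis
    by (simp add: C1_on_def)
qed

lemma C1_on_sum:
  assumes "finite I" "\<And>i. i \<in> I \<Longrightarrow> C1_on U (f i)"
  shows "C1_on U (\<lambda>x. \<Sum>i\<in>I. f i x)"
  using assms by (induction I rule: finite_induct) (simp_all add: C1_on_const C1_on_add)

lemma C1_differentiable_on_UNIV_deriv:
  fixes g :: "real \<Rightarrow> real"
  assumes "g C1_differentiable_on UNIV"
  shows "(g has_real_derivative deriv g t) (at t)" and "continuous_on UNIV (deriv g)"
proof -
  obtain D where D: "\<And>t. (g has_real_derivative D t) (at t)" and "continuous_on UNIV D"
    using assms by (auto simp: C1_differentiable_on_def has_real_derivative_iff_has_vector_derivative)
  moreover have "deriv g = D"
    using D by (auto intro: DERIV_imp_deriv)
  ultimately show "(g has_real_derivative deriv g t) (at t)" "continuous_on UNIV (deriv g)"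
    by simp_all
qed

lemma C1_on_ridge_sum:
  assumes "finite I" "\<forall>i\<in>I. \<psi> i C1_differentiable_on UNIV"
  shows "C1_on U (\<lambda>x. \<Sum>i\<in>I. \<psi> i (a i \<bullet> x + b i))"
proof (rule C1_on_sum[OF \<open>finite I\<close>])
  fix i assume "i \<in> I"
  then show "C1_on U (\<lambda>x. \<psi> i (a i \<bullet> x + b i))"
    using assms(2) C1_differentiable_on_UNIV_deriv[of "\<psi> i"]
    by (blast intro: C1_on_compose(1)[OF C1_on_affine])
qed

lemma continuous_imp_has_antiderivative:
  fixes \<gamma> :: "real \<Rightarrow> real"
  assumes "continuous_on UNIV \<gamma>"
  obtains \<Phi> where "\<And>t. (\<Phi> has_real_derivative \<gamma> t) (at t)"
proof -
  have "\<exists>\<Phi>. \<forall>t::real. -\<infinity> < ereal t \<longrightarrow> ereal t < \<infinity> \<longrightarrow> (\<Phi> has_vector_derivative \<gamma> t) (at t)"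
    by (rule einterval_antiderivative) (use assms in \<open>auto simp: continuous_on_eq_continuous_at\<close>)
  then show ?thesis
    using that by (auto simp: has_real_derivative_iff_has_vector_derivative)
qed

lemma diff_variation_le_grad_dist:
  fixes f g :: "real^'n \<Rightarrow> real"
  assumes "convex S" and "\<forall>y\<in>S. f differentiable (at y)" "\<forall>y\<in>S. g differentiable (at y)"
    and "\<forall>y\<in>S. norm (grad f y - grad g y) \<le> \<eta>" and "x \<in> S" "x0 \<in> S"
  shows "\<bar>f x - g x - (f x0 - g x0)\<bar> \<le> \<eta> * norm (x - x0)"
proof -
  have "norm ((\<lambda>y. f y - g y) x - (\<lambda>y. f y - g y) x0) \<le> \<eta> * norm (x - x0)"
  proof (rule differentiable_bound[OF \<open>convex S\<close> _ _ \<open>x \<in> S\<close> \<open>x0 \<in> S\<close>])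
    fix y assume "y \<in> S"
    then show "((\<lambda>y. f y - g y) has_derivative (\<lambda>h. (grad f y - grad g y) \<bullet> h)) (at y within S)"
      using assms has_derivative_diff[OF has_derivative_grad has_derivative_grad, of f y g]
      by (auto simp: inner_diff_left intro: has_derivative_at_withinI)
    show "onorm (\<lambda>h. (grad f y - grad g y) \<bullet> h) \<le> \<eta>"
      using onorm_inner_le assms \<open>y \<in> S\<close> order_trans by blast
  qed
  then show ?thesis by simp
qed

lemma norm_scaleR_diff_le:
  fixes r g :: "'a::real_normed_vector"
  assumes "\<bar>u\<bar> \<le> L" "norm (r - g) \<le> \<eta>" "\<bar>u - v\<bar> \<le> e" "\<bar>v - w\<bar> \<le> e" "norm g \<le> M"
  shows "norm (u *\<^sub>R r - w *\<^sub>R g) \<le> L * \<eta> + 2 * e * M"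
proof -
  have "u *\<^sub>R r - w *\<^sub>R g = u *\<^sub>R (r - g) + (u - v) *\<^sub>R g + (v - w) *\<^sub>R g"
    by (simp add: algebra_simps)
  also have "norm \<dots> \<le> norm (u *\<^sub>R (r - g)) + norm ((u - v) *\<^sub>R g) + norm ((v - w) *\<^sub>R g)"
    by (meson add_mono norm_triangle_ineq order_refl order_trans)
  also have "\<dots> \<le> L * \<eta> + e * M + e * M"
  proof -
    have "0 \<le> L" "0 \<le> e" using assms(1,3) abs_ge_zero order_trans by blast+
    then show ?thesis
      using assms by (simp only: norm_scaleR) (intro add_mono mult_mono; simp)
  qed
  finally show ?thesis by (simp add: algebra_simps)
qed

lemma eventually_mult_less_at_right:
  "c > 0 \<Longrightarrow> \<forall>\<^sub>F \<eta> in at_right (0::real). \<eta> * M < c"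
  by (rule order_tendstoD(2)) (auto intro!: tendsto_eq_intros)

lemma chain_gradient_approximation:
  fixes R :: "real^'n \<Rightarrow> real" and T' :: "real \<Rightarrow> real"
  assumes S: "compact S" "convex S" "x0 \<in> S" and R: "C1_on S R"
    and T': "continuous_on UNIV T'"
    and \<Gamma>_dense: "\<And>K e. compact K \<Longrightarrow> e > 0 \<Longrightarrow> \<exists>\<gamma>\<in>\<Gamma>. \<forall>t\<in>K. \<bar>T' t - \<gamma> t\<bar> < e"
    and \<G>_diff: "\<And>G y. G \<in> \<G> \<Longrightarrow> y \<in> S \<Longrightarrow> G differentiable (at y)"
    and \<G>_dense: "\<And>\<eta>. \<eta> > 0 \<Longrightarrow> \<exists>G\<in>\<G>. \<forall>y\<in>S. norm (grad R y - grad G y) < \<eta>"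
    and \<epsilon>: "\<epsilon> > 0"
  obtains \<gamma> G where "\<gamma> \<in> \<Gamma>" and "G \<in> \<G>"
    and "\<And>x. x \<in> S \<Longrightarrow>
           norm (T' (R x) *\<^sub>R grad R x - \<gamma> (G x + (R x0 - G x0)) *\<^sub>R grad G x) \<le> \<epsilon>"
proof -
  have "bounded (R ` S)" "bounded (grad R ` S)"
    using R S(1) by (auto simp: C1_on_def intro!: compact_imp_bounded compact_continuous_image
        C1_on_imp_continuous_on)
  then obtain C B where C: "\<forall>x\<in>S. \<bar>R x\<bar> \<le> C" and B: "\<forall>x\<in>S. norm (grad R x) \<le> B"
    by (auto simp: bounded_iff)
  obtain D where D: "\<forall>x\<in>S. norm (x - x0) \<le> D"
    using compact_imp_bounded[OF S(1)] bounded_any_center[of S x0]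
    by (auto simp: dist_norm norm_minus_commute)
  define K where "K = {-(C+1)..C+1}"
  have K: "compact K" "continuous_on K T'"
    using T' by (auto simp: K_def intro: continuous_on_subset)
  then obtain L where L: "\<forall>t\<in>K. \<bar>T' t\<bar> \<le> L"
    using compact_imp_bounded[OF compact_continuous_image] by (force simp: bounded_iff)
  define e where "e = \<epsilon> / (3 * (B + 1))"
  have "B \<ge> 0" using B S(3) norm_ge_zero order_trans by blast
  then have e: "e > 0" "e * (B + 1) = \<epsilon> / 3"
    using \<epsilon> by (simp_all add: e_def field_simps)
  obtain \<delta> where \<delta>: "\<delta> > 0" "\<And>s t. s \<in> K \<Longrightarrow> t \<in> K \<Longrightarrow> dist t s < \<delta> \<Longrightarrow> dist (T' t) (T' s) < e"
    using uniformly_continuous_onE[OF compact_uniformly_continuous[OF K(2,1)] e(1)] by metis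
  have "\<forall>\<^sub>F \<eta> in at_right 0. 0 < \<eta> \<and> \<eta> * 1 < 1 \<and> \<eta> * D < 1 \<and> \<eta> * D < \<delta> \<and> \<eta> * L < \<epsilon> / 3"
    using \<delta>(1) \<epsilon> by (intro eventually_conj eventually_at_right_less eventually_mult_less_at_right) simp_all
  then obtain \<eta> where \<eta>: "0 < \<eta>" "\<eta> < 1" "\<eta> * D < 1" "\<eta> * D < \<delta>" "\<eta> * L < \<epsilon> / 3"
    using eventually_happens'[OF trivial_limit_at_right_real] by auto
  obtain G where G: "G \<in> \<G>" and G_close: "\<forall>y\<in>S. norm (grad R y - grad G y) < \<eta>"
    using \<G>_dense[OF \<eta>(1)] by blast
  obtain \<gamma> where \<gamma>: "\<gamma> \<in> \<Gamma>" and \<gamma>_close: "\<forall>t\<in>K. \<bar>T' t - \<gamma> t\<bar> < e"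
    using \<Gamma>_dense[OF K(1) e(1)] by blast
  show thesis
  proof (rule that[OF \<gamma> G])
    fix x assume x: "x \<in> S"
    define t where "t = G x + (R x0 - G x0)"
    have "\<bar>G x - R x - (G x0 - R x0)\<bar> \<le> \<eta> * norm (x - x0)"
      using \<G>_diff[OF G] G_close R S x
      by (intro diff_variation_le_grad_dist) (auto simp: C1_on_def norm_minus_commute less_imp_le)
    also have "\<dots> \<le> \<eta> * D" using D x \<eta>(1) by (simp add: mult_left_mono)
    finally have "\<bar>t - R x\<bar> \<le> \<eta> * D" by (simp add: t_def algebra_simps)
    then have t: "t \<in> K" "dist (R x) t < \<delta>" and Rx: "R x \<in> K"
      using C x \<eta>(3,4) by (auto simp: K_def dist_real_def abs_le_iff)
    have gG: "norm (grad G x) \<le> B + 1"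
      using norm_triangle_sub[of "grad G x" "grad R x"] B G_close x \<eta>(2)
      by (fastforce simp: norm_minus_commute)
    have "norm (T' (R x) *\<^sub>R grad R x - \<gamma> t *\<^sub>R grad G x) \<le> L * \<eta> + 2 * e * (B + 1)"
    proof (rule norm_scaleR_diff_le)
      show "\<bar>T' (R x) - T' t\<bar> \<le> e"
        using less_imp_le[OF \<delta>(2)[OF t(1) Rx t(2)]] by (simp add: dist_real_def)
    qed (use L Rx G_close x t \<gamma>_close gG in \<open>auto intro: less_imp_le\<close>)
    also have "\<dots> \<le> \<epsilon>" using \<eta>(5) e(2) by (simp only: mult.commute[of L] mult.assoc)
    finally show "norm (T' (R x) *\<^sub>R grad R x - \<gamma> (G x + (R x0 - G x0)) *\<^sub>R grad G x) \<le> \<epsilon>"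
      by (simp add: t_def)
  qed
qed

lemma C1_on_compose_antiderivative:
  assumes \<gamma>: "continuous_on UNIV \<gamma>" and G: "C1_on U G"
  shows "\<exists>\<Phi>. (\<forall>t. (\<Phi> has_real_derivative \<gamma> t) (at t)) \<and> C1_on U (\<lambda>x. \<Phi> (G x + \<beta>))
    \<and> (\<forall>x\<in>U. grad (\<lambda>x. \<Phi> (G x + \<beta>)) x = \<gamma> (G x + \<beta>) *\<^sub>R grad G x)"
proof -
  obtain \<Phi> where \<Phi>: "\<And>t. (\<Phi> has_real_derivative \<gamma> t) (at t)"
    using continuous_imp_has_antiderivative[OF \<gamma>] by blast
  have shift: "((\<lambda>s. s + \<beta>) has_real_derivative 1) (at t)" for t
    by (auto intro!: derivative_eq_intros)
  have "\<And>t. ((\<lambda>s. \<Phi> (s + \<beta>)) has_real_derivative \<gamma> (t + \<beta>)) (at t)"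
    using DERIV_chain2[OF \<Phi> shift] by simp
  moreover have "continuous_on UNIV (\<lambda>s. \<gamma> (s + \<beta>))"
    by (auto intro!: continuous_on_compose2[OF \<gamma>] continuous_intros)
  ultimately show ?thesis
    using C1_on_compose[OF G, of "\<lambda>s. \<Phi> (s + \<beta>)" "\<lambda>s. \<gamma> (s + \<beta>)"] \<Phi> by blast
qed

theorem theorem5:
  fixes \<Gamma> :: "(real \<Rightarrow> real) set"
    and \<G> :: "(real^'n \<Rightarrow> real) set"
    and T :: "real \<Rightarrow> real"
    and N :: nat
    and \<psi> :: "nat \<Rightarrow> real \<Rightarrow> real"
    and a :: "nat \<Rightarrow> real^'n"
    and b :: "nat \<Rightarrow> real"
    and F :: "real^'n \<Rightarrow> real"
  assumes \<Gamma>_cont: "\<forall>\<gamma>\<in>\<Gamma>. continuous_on UNIV \<gamma>"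
    and \<Gamma>_dense: "\<And>K h \<eta>. compact K \<Longrightarrow> continuous_on K h \<Longrightarrow> \<eta> > 0 \<Longrightarrow>
                   \<exists>\<gamma>\<in>\<Gamma>. \<forall>t\<in>K. \<bar>h t - \<gamma> t\<bar> < \<eta>"
    and \<G>_C1: "\<forall>G\<in>\<G>. \<exists>U. open U \<and> unit_cube \<subseteq> U \<and> C1_on U G"
    and \<G>_dense: "\<And>M (\<phi>::nat \<Rightarrow> real \<Rightarrow> real) (c::nat \<Rightarrow> real^'n) (e::nat \<Rightarrow> real) \<eta>.
                   (\<forall>i\<in>{1..M}. \<phi> i C1_differentiable_on UNIV) \<Longrightarrow> \<eta> > 0 \<Longrightarrow>
                   \<exists>G\<in>\<G>. \<forall>x\<in>unit_cube.
                     norm (grad (\<lambda>y. \<Sum>i=1..M. \<phi> i (c i \<bullet> y + e i)) x - grad G x) < \<eta>"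
    and T_C1: "T C1_differentiable_on UNIV"
    and \<psi>_C1: "\<forall>i\<in>{1..N}. \<psi> i C1_differentiable_on UNIV"
    and F_def: "F = (\<lambda>x. T (\<Sum>i=1..N. \<psi> i (a i \<bullet> x + b i)))"
  shows "(\<forall>\<epsilon>>0. \<exists>\<gamma>\<in>\<Gamma>. \<exists>G\<in>\<G>. \<exists>\<beta>::real.
            (SUP x\<in>unit_cube. norm (grad F x - \<gamma> (G x + \<beta>) *\<^sub>R grad G x)) < \<epsilon>)
       \<and> (\<forall>(\<gamma>::real \<Rightarrow> real) (G::real^'n \<Rightarrow> real) (\<beta>::real) U.
            continuous_on UNIV \<gamma> \<longrightarrow> open U \<longrightarrow> unit_cube \<subseteq> U \<longrightarrow> C1_on U G \<longrightarrow>
            (\<exists>\<Phi>::real \<Rightarrow> real. (\<forall>t. (\<Phi> has_real_derivative \<gamma> t) (at t))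
               \<and> C1_on U (\<lambda>x. \<Phi> (G x + \<beta>))
               \<and> (\<forall>x\<in>unit_cube. grad (\<lambda>x. \<Phi> (G x + \<beta>)) x = \<gamma> (G x + \<beta>) *\<^sub>R grad G x)))"
proof -
  define R where "R = (\<lambda>x. \<Sum>i=1..N. \<psi> i (a i \<bullet> x + b i))"
  have R: "C1_on U R" for U
    unfolding R_def using \<psi>_C1 by (intro C1_on_ridge_sum) auto
  note T' = C1_differentiable_on_UNIV_deriv[OF T_C1]
  have grad_F: "grad F x = deriv T (R x) *\<^sub>R grad R x" for x
    using C1_on_compose(2)[OF R T', of x UNIV] by (simp add: F_def R_def)
  have cube: "compact unit_cube" "convex unit_cube" "(0::real^'n) \<in> unit_cube"
    by (auto simp: convex_box mem_box_cart)
  have "\<exists>\<gamma>\<in>\<Gamma>. \<exists>G\<in>\<G>. \<exists>\<beta>. (SUP x\<in>unit_cube. norm (grad F x - \<gamma> (G x + \<beta>) *\<^sub>R grad G x)) < \<epsilon>"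
    if "\<epsilon> > 0" for \<epsilon>
  proof -
    obtain \<gamma> G where "\<gamma> \<in> \<Gamma>" "G \<in> \<G>" and close: "\<And>x. x \<in> unit_cube \<Longrightarrow>
        norm (grad F x - \<gamma> (G x + (R 0 - G 0)) *\<^sub>R grad G x) \<le> \<epsilon> / 2"
    proof (rule chain_gradient_approximation[OF cube R T'(2), where \<epsilon> = "\<epsilon> / 2",
          unfolded grad_F[symmetric]])
      show "\<exists>\<gamma>\<in>\<Gamma>. \<forall>t\<in>K. \<bar>deriv T t - \<gamma> t\<bar> < e" if "compact K" "e > 0" for K e
        using \<Gamma>_dense[OF that(1) continuous_on_subset[OF T'(2)] that(2)] by blast
      show "G differentiable (at y)" if "G \<in> \<G>" "y \<in> unit_cube" for G y
        using \<G>_C1 that by (force simp: C1_on_def)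
      show "\<exists>G\<in>\<G>. \<forall>y\<in>unit_cube. norm (grad R y - grad G y) < \<eta>" if "\<eta> > 0" for \<eta>
        using \<G>_dense[OF \<psi>_C1 that] by (simp add: R_def)
    qed (use \<open>\<epsilon> > 0\<close> in auto)
    then have "(SUP x\<in>unit_cube. norm (grad F x - \<gamma> (G x + (R 0 - G 0)) *\<^sub>R grad G x)) \<le> \<epsilon> / 2"
      using cube(3) by (intro cSUP_least) auto
    then show ?thesis
      using \<open>\<gamma> \<in> \<Gamma>\<close> \<open>G \<in> \<G>\<close> \<open>\<epsilon> > 0\<close> by (intro bexI exI[of _ "R 0 - G 0"]) auto
  qed
  moreover have "\<exists>\<Phi>. (\<forall>t. (\<Phi> has_real_derivative \<gamma> t) (at t)) \<and> C1_on U (\<lambda>x. \<Phi> (G x + \<beta>))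
      \<and> (\<forall>x\<in>unit_cube. grad (\<lambda>x. \<Phi> (G x + \<beta>)) x = \<gamma> (G x + \<beta>) *\<^sub>R grad G x)"
    if \<gamma>: "continuous_on UNIV \<gamma>" and U: "unit_cube \<subseteq> U" and G: "C1_on U G"
    for \<gamma> :: "real \<Rightarrow> real" and G :: "real^'n \<Rightarrow> real" and \<beta> U
    using C1_on_compose_antiderivative[OF \<gamma> G, of \<beta>] U by blast
  ultimately show ?thesis
    by (intro conjI allI impI)
qed

end
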